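(* Let $\mathcal{P}$ be a probability distribution on $\mathbb{R}$ and let $X$ be a random variable with distribution $\mathcal{P}$. Define the tail quantile function $g(p) := \inf\{r \in \mathbb{R} : \mathbb{P}(X \geq r) \leq p\}$ for $0<p<1$. Assume that (1) $\mathbb{E}|X| < \infty$, and (2) $g(p) \to \infty$ as $p \to 0^+$, and $g$ is slowly varying at zero, i.e. $g(\lambda p)/g(p) \to 1$ as $p \to 0^+$ for every fixed $\lambda > 0$. For each $n \in \mathbb{N}$, let $X_1,\dots,X_n$ be i.i.d. with distribution $\mathcal{P}$ and set $M_n = \max_{1\le i\le n} X_i$; also let $(X_{ij})_{1\le i,j\le n}$ be an $n\times n$ random matrix with i.i.d. entries having distribution $\mathcal{P}$, and set $\mathcal{M}_n = \max_{\pi \in SS_n} \sum_{i=1}^n X_{i\pi(i)}$, where $SS_n$ is the set of permutations of $\{1,\dots,n\}$. Then $$\mathbb{E} M_n = g(1/n)(1+o(1)) \quad \text{as } n\to\infty,$$ and $$\mathbb{E} \mathcal{M}_n = n\, g(1/n)(1+o(1)) \quad \text{as } n\to\infty.$$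
   Context: $\{S(\pi)=\sum_{i=1}^n X_{i\pi(i)}, \pi\in SS_n\}$ is called the random assignment process; $\mathcal{M}_n$ is its maximum. *)

theory Defs
  imports "HOL-Probability.Probability" "HOL-Library.Landau_Symbols"
begin

definition tail_quantile :: "real measure \<Rightarrow> real \<Rightarrow> real" where
  "tail_quantile P p = Inf {r. measure P {r..} \<le> p}"

definition sample_max :: "nat \<Rightarrow> (nat \<Rightarrow> real) \<Rightarrow> real" where
  "sample_max n x = Max (x ` {..<n})"

definition assignment_max :: "nat \<Rightarrow> (nat \<times> nat \<Rightarrow> real) \<Rightarrow> real" where
  "assignment_max n x = Max ((\<lambda>\<pi>. \<Sum>i<n. x (i, \<pi> i)) ` {\<pi>. \<pi> permutes {..<n}})"

end

theory Submission
  imports Defs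
begin

text \<open>
  Upper bounds: for every level \<open>t\<close>, \<open>max\<^sub>i X\<^sub>i \<le> t + \<Sum>\<^sub>i (X\<^sub>i - t)\<^sup>+\<close>, and an assignment is worth
  at most the sum of the row maxima; hence \<open>E M\<^sub>n \<le> t + n E(X - t)\<^sup>+\<close> and
  \<open>E \<M>\<^sub>n \<le> n (t + n E(X - t)\<^sup>+)\<close>. Slow variation gives \<open>g(p/4) \<le> 2 g(p)\<close> for small \<open>p\<close>, and
  splitting the excess over the levels \<open>g(p/4\<^sup>k) + 1\<close> yields \<open>E(X - g(p) - 1)\<^sup>+ \<le> p (4 g(p) + 2)\<close>;
  with \<open>t = g(a/n) + 1\<close> the excess term is \<open>O(a g(a/n))\<close>.

  Lower bounds: \<open>P(X \<ge> g(q) - 1) > q\<close>, so the maximum of \<open>c\<close> samples exceeds \<open>g(q) - 1\<close> with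
  probability at least \<open>1 - (1 - q)\<^sup>c\<close>, and \<open>-E|X|\<close> bounds the loss elsewhere. Filling the rows one
  after another with the best entry among the columns still free collects these bounds for
  \<open>c = n, n - 1, \<dots>, 1\<close>; with \<open>q = b/n\<close> the total loss is a factor \<open>1 - 1/b\<close>.

  Slow variation turns \<open>g(a/n)\<close> and \<open>g(b/n)\<close> into \<open>g(1/n)(1 + o(1))\<close>, and \<open>g(1/n) \<rightarrow> \<infinity>\<close>
  absorbs the additive constants; letting \<open>a \<rightarrow> 0\<close> and \<open>b \<rightarrow> \<infinity>\<close> proves both asymptotics.
\<close>

lemma asymp_equivI_eventually_ratio_bounds:
  fixes f h :: "'a \<Rightarrow> real"
  assumes h_pos: "eventually (\<lambda>x. 0 < h x) F"
    and upper: "\<And>e. 0 < e \<Longrightarrow> eventually (\<lambda>x. f x \<le> (1 + e) * h x) F"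
    and lower: "\<And>e. 0 < e \<Longrightarrow> eventually (\<lambda>x. (1 - e) * h x \<le> f x) F"
  shows "f \<sim>[F] h"
proof (rule asymp_equivI', rule tendstoI)
  fix e :: real
  assume "0 < e"
  then have "eventually (\<lambda>x. f x \<le> (1 + e / 2) * h x) F"
    and "eventually (\<lambda>x. (1 - e / 2) * h x \<le> f x) F"
    by (auto intro: upper lower)
  with h_pos show "eventually (\<lambda>x. dist (f x / h x) 1 < e) F"
  proof eventually_elim
    case (elim x)
    then have "0 < e * h x" using \<open>0 < e\<close> by simp
    with elim show ?case by (auto simp: dist_real_def abs_less_iff field_simps)
  qed
qed

lemma sum_power_Suc_le_inverse:
  fixes q :: real
  assumes "0 < q" "q \<le> 1"
  shows "(\<Sum>c<n. (1 - q) ^ Suc c) \<le> 1 / q"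
proof -
  have "(\<Sum>c<n. (1 - q) ^ Suc c) = (1 - q) * ((1 - (1 - q) ^ n) / q)"
    using assms by (simp add: sum_distrib_left[symmetric] sum_gp_strict)
  also have "\<dots> \<le> 1 * (1 / q)"
    using assms by (intro mult_mono divide_right_mono) (auto simp: power_le_one)
  finally show ?thesis by simp
qed

lemma of_nat_mult_power_le_inverse:
  fixes q :: real
  assumes "0 < q" "q \<le> 1"
  shows "real n * (1 - q) ^ n \<le> 1 / q"
proof -
  have "real n * (1 - q) ^ n = (\<Sum>c<n. (1 - q) ^ n)" by simp
  also have "\<dots> \<le> (\<Sum>c<n. (1 - q) ^ Suc c)"
    using assms by (intro sum_mono power_decreasing) auto
  finally show ?thesis using sum_power_Suc_le_inverse[OF assms, of n] by linarith
qed

lemma (in product_sigma_finite) integral_PiM_union_ge: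
  fixes f h :: "_ \<Rightarrow> real"
  assumes disj: "I \<inter> J = {}" and fin: "finite I" "finite J"
    and f: "integrable (PiM (I \<union> J) M) f" and h: "integrable (PiM I M) h"
    and le: "\<And>y. y \<in> space (PiM I M) \<Longrightarrow> integrable (PiM J M) (\<lambda>z. f (merge I J (y, z))) \<Longrightarrow>
               h y \<le> (\<integral>z. f (merge I J (y, z)) \<partial>PiM J M)"
  shows "integral\<^sup>L (PiM I M) h \<le> integral\<^sup>L (PiM (I \<union> J) M) f"
proof -
  interpret I: finite_product_sigma_finite M I by standard fact
  interpret J: finite_product_sigma_finite M J by standard fact
  interpret IJ: pair_sigma_finite "PiM I M" "PiM J M" ..
  have f_merge: "integrable (PiM I M \<Otimes>\<^sub>M PiM J M) (\<lambda>x. f (merge I J x))"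
    by (rule integrable_distr[OF measurable_merge]) (simp add: distr_merge[OF disj fin] f)
  have "AE y in PiM I M. h y \<le> (\<integral>z. f (merge I J (y, z)) \<partial>PiM J M)"
    using IJ.AE_integrable_fst'[OF f_merge] AE_space by eventually_elim (simp add: le)
  then have "integral\<^sup>L (PiM I M) h \<le> (\<integral>y. (\<integral>z. f (merge I J (y, z)) \<partial>PiM J M) \<partial>PiM I M)"
    using IJ.integrable_fst'[OF f_merge] by (intro integral_mono_AE h) simp_all
  also have "\<dots> = integral\<^sup>L (PiM (I \<union> J) M) f"
    by (rule product_integral_fold[OF disj fin f, symmetric])
  finally show ?thesis .
qed

lemma Max_le_add_sum_excess:
  fixes f :: "'a \<Rightarrow> real"
  assumes "finite I" "I \<noteq> {}"
  shows "Max (f ` I) \<le> t + (\<Sum>i\<in>I. max (f i - t) 0)"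
proof -
  have "Max (f ` I) \<in> f ` I" using assms by (intro Max_in) auto
  then obtain j where j: "j \<in> I" "Max (f ` I) = f j" by auto
  have "max (f j - t) 0 \<le> (\<Sum>i\<in>I. max (f i - t) 0)"
    using assms(1) j(1) by (intro member_le_sum) auto
  then show ?thesis using j(2) by linarith
qed

lemma excess_le_suminf_indicator:
  fixes t :: "nat \<Rightarrow> real"
  assumes "\<And>k. 0 \<le> t k" "filterlim t at_top sequentially"
  shows "ennreal (max (x - t 0) 0) \<le> (\<Sum>k. ennreal (t (Suc k)) * indicator {t k..} x)"
proof (cases "x < t 0")
  case False
  define f where "f = (\<lambda>k. ennreal (t (Suc k)) * indicator {t k..} x)"
  obtain N where "x < t N"
    using assms(2) by (auto simp: filterlim_at_top_dense eventually_sequentially)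
  then obtain j where j: "t j \<le> x" "x < t (Suc j)"
    using exists_least_lemma[of "\<lambda>k. x < t k"] False by (auto simp: not_less)
  have "ennreal (max (x - t 0) 0) \<le> f j"
    using j assms(1)[of 0] assms(1)[of "Suc j"] by (auto simp: f_def intro!: ennreal_leI)
  also have "f j \<le> suminf f"
  proof (rule ccontr)
    assume "\<not> f j \<le> suminf f"
    then have "suminf f < f j" by (simp add: not_le)
    then have "f j < f j" by (rule ennreal_suminf_lessD)
    then show False by simp
  qed
  finally show ?thesis by (simp add: f_def)
qed simp

lemma filterlim_const_over_nat_at_right_0:
  assumes "0 < c"
  shows "filterlim (\<lambda>n::nat. c / real n) (at_right 0) sequentially"
proof (rule tendsto_imp_filterlim_at_right)
  show "(\<lambda>n. c / real n) \<longlonglongrightarrow> 0" by (rule lim_const_over_n)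
  show "eventually (\<lambda>n. 0 < c / real n) sequentially"
    using eventually_gt_at_top[of 0] by eventually_elim (simp add: assms)
qed

section \<open>Assignments of rows to distinct columns\<close>

definition injections :: "'a set \<Rightarrow> 'b set \<Rightarrow> ('a \<Rightarrow> 'b) set" where
  "injections R C = {\<pi> \<in> R \<rightarrow>\<^sub>E C. inj_on \<pi> R}"

definition assignment_max_on :: "'a set \<Rightarrow> 'b set \<Rightarrow> ('a \<times> 'b \<Rightarrow> real) \<Rightarrow> real" where
  "assignment_max_on R C x = Max ((\<lambda>\<pi>. \<Sum>i\<in>R. x (i, \<pi> i)) ` injections R C)"

lemma finite_injections: "finite R \<Longrightarrow> finite C \<Longrightarrow> finite (injections R C)"
  unfolding injections_def by (rule finite_subset[OF _ finite_PiE]) auto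

lemma injections_nonempty:
  assumes "finite R" "finite C" "card R \<le> card C"
  shows "injections R C \<noteq> {}"
proof -
  obtain f where "f ` R \<subseteq> C" "inj_on f R" using card_le_inj[OF assms] by blast
  then have "restrict f R \<in> injections R C" by (auto simp: injections_def inj_on_def)
  then show ?thesis by auto
qed

lemma assignment_max_on_attained:
  assumes "finite R" "finite C" "card R \<le> card C"
  obtains \<pi> where "\<pi> \<in> injections R C" "assignment_max_on R C x = (\<Sum>i\<in>R. x (i, \<pi> i))"
proof -
  have "assignment_max_on R C x \<in> (\<lambda>\<pi>. \<Sum>i\<in>R. x (i, \<pi> i)) ` injections R C"
    unfolding assignment_max_on_def
    using finite_injections[OF assms(1,2)] injections_nonempty[OF assms] by (intro Max_in) auto
  then show ?thesis using that by blast
qed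

lemma assignment_max_on_ge:
  assumes "finite R" "finite C" "\<pi> \<in> injections R C"
  shows "(\<Sum>i\<in>R. x (i, \<pi> i)) \<le> assignment_max_on R C x"
  unfolding assignment_max_on_def using finite_injections[OF assms(1,2)] assms(3) by (intro Max_ge) auto

lemma assignment_max_on_empty [simp]: "assignment_max_on {} C x = 0"
  by (simp add: assignment_max_on_def injections_def)

lemma assignment_max_on_cong:
  assumes "\<And>k. k \<in> R \<times> C \<Longrightarrow> x k = y k"
  shows "assignment_max_on R C x = assignment_max_on R C y"
proof -
  have "(\<Sum>i\<in>R. x (i, \<pi> i)) = (\<Sum>i\<in>R. y (i, \<pi> i))" if "\<pi> \<in> injections R C" for \<pi>
    using that assms by (intro sum.cong) (auto simp: injections_def)
  then show ?thesis unfolding assignment_max_on_def by (metis (no_types, lifting) image_cong)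
qed

lemma assignment_max_on_insert_ge:
  assumes "finite R" "finite C" "r \<notin> R" "j \<in> C" "card R < card C"
  shows "x (r, j) + assignment_max_on R (C - {j}) x \<le> assignment_max_on (insert r R) C x"
proof -
  have "card R \<le> card (C - {j})" using assms by (simp add: card_Diff_singleton)
  then obtain \<pi> where \<pi>: "\<pi> \<in> injections R (C - {j})"
      "assignment_max_on R (C - {j}) x = (\<Sum>i\<in>R. x (i, \<pi> i))"
    using assignment_max_on_attained[OF assms(1) finite_Diff[OF assms(2)]] by blast
  define \<sigma> where "\<sigma> = \<pi>(r := j)"
  have "\<sigma> \<in> injections (insert r R) C"
    using \<pi>(1) assms(3,4) by (auto simp: \<sigma>_def injections_def PiE_iff inj_on_def extensional_def)
  then have "(\<Sum>i\<in>insert r R. x (i, \<sigma> i)) \<le> assignment_max_on (insert r R) C x"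
    using assms(1,2) by (intro assignment_max_on_ge) simp_all
  moreover have "(\<Sum>i\<in>insert r R. x (i, \<sigma> i)) = x (r, j) + (\<Sum>i\<in>R. x (i, \<pi> i))"
    using assms(1,3) by (auto simp: \<sigma>_def intro!: sum.cong)
  ultimately show ?thesis using \<pi>(2) by simp
qed

lemma abs_assignment_max_on_le:
  assumes "finite R" "finite C" "card R \<le> card C" "finite J" "R \<times> C \<subseteq> J"
  shows "\<bar>assignment_max_on R C x\<bar> \<le> (\<Sum>k\<in>J. \<bar>x k\<bar>)"
proof -
  obtain \<pi> where \<pi>: "\<pi> \<in> injections R C" "assignment_max_on R C x = (\<Sum>i\<in>R. x (i, \<pi> i))"
    using assignment_max_on_attained[OF assms(1-3)] .
  have inj: "inj_on (\<lambda>i. (i, \<pi> i)) R" by (auto simp: inj_on_def)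
  have "\<bar>assignment_max_on R C x\<bar> \<le> (\<Sum>i\<in>R. \<bar>x (i, \<pi> i)\<bar>)" using \<pi>(2) by (simp add: sum_abs)
  also have "\<dots> = (\<Sum>k\<in>(\<lambda>i. (i, \<pi> i)) ` R. \<bar>x k\<bar>)" by (simp add: sum.reindex[OF inj])
  also have "\<dots> \<le> (\<Sum>k\<in>J. \<bar>x k\<bar>)"
    using \<pi>(1) assms(4,5) by (intro sum_mono2) (auto simp: injections_def)
  finally show ?thesis .
qed

lemma assignment_max_on_le_sum_Max:
  assumes "finite R" "finite C" "card R \<le> card C"
  shows "assignment_max_on R C x \<le> (\<Sum>i\<in>R. Max ((\<lambda>j. x (i, j)) ` C))"
proof -
  obtain \<pi> where \<pi>: "\<pi> \<in> injections R C" "assignment_max_on R C x = (\<Sum>i\<in>R. x (i, \<pi> i))"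
    using assignment_max_on_attained[OF assms] .
  show ?thesis
    unfolding \<pi>(2) using \<pi>(1) assms(2) by (intro sum_mono Max_ge) (auto simp: injections_def)
qed

lemma assignment_max_eq_assignment_max_on:
  "assignment_max n x = assignment_max_on {..<n} {..<n} x"
proof -
  let ?w = "\<lambda>\<pi>. \<Sum>i<n. x (i, \<pi> i)"
  have "?w ` {\<pi>. \<pi> permutes {..<n}} = ?w ` injections {..<n} {..<n}"
  proof (intro equalityI image_subsetI)
    fix \<pi> assume "\<pi> \<in> {\<pi>. \<pi> permutes {..<n}}"
    then have "restrict \<pi> {..<n} \<in> injections {..<n} {..<n}"
      using permutes_in_image[of \<pi> "{..<n}"]
      by (auto simp: injections_def intro: inj_on_subset[OF permutes_inj])
    moreover have "?w \<pi> = ?w (restrict \<pi> {..<n})" by simp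
    ultimately show "?w \<pi> \<in> ?w ` injections {..<n} {..<n}" by blast
  next
    fix \<pi> assume \<pi>: "\<pi> \<in> injections {..<n} {..<n}"
    define \<sigma> where "\<sigma> i = (if i < n then \<pi> i else i)" for i
    have "inj_on \<sigma> {..<n}" "\<sigma> ` {..<n} \<subseteq> {..<n}"
      using \<pi> by (auto simp: injections_def inj_on_def \<sigma>_def)
    then have "bij_betw \<sigma> {..<n} {..<n}" by (simp add: bij_betw_def endo_inj_surj)
    then have "\<sigma> permutes {..<n}" by (rule bij_imp_permutes) (simp add: \<sigma>_def)
    moreover have "?w \<pi> = ?w \<sigma>" by (simp add: \<sigma>_def)
    ultimately show "?w \<pi> \<in> ?w ` {\<pi>. \<pi> permutes {..<n}}" by blast
  qed
  then show ?thesis by (simp add: assignment_max_def assignment_max_on_def)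
qed

section \<open>The tail quantile function and i.i.d. products\<close>

context real_distribution
begin

lemma tail_quantile_set_nonempty:
  assumes "0 < p"
  shows "{r. measure M {r..} \<le> p} \<noteq> {}"
proof -
  have "eventually (\<lambda>r. 1 - p < cdf M r) at_top"
    using cdf_lim_at_top_prob assms by (intro order_tendstoD) auto
  then obtain r where r: "1 - p < cdf M r"
    by (auto simp: eventually_at_top_linorder)
  have "measure M {r + 1..} \<le> measure M (space M - {..r})"
    by (intro finite_measure_mono) auto
  also have "\<dots> = 1 - cdf M r"
    using prob_compl[of "{..r}"] by (simp add: cdf_def)
  finally show ?thesis using r by (intro exI[of _ "r + 1"] ex_in_conv[THEN iffD1]) auto
qed

lemma bdd_below_tail_quantile_set:
  assumes "p < 1"
  shows "bdd_below {r. measure M {r..} \<le> p}"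
proof -
  have "eventually (\<lambda>r. cdf M r < 1 - p) at_bot"
    using cdf_lim_at_bot assms by (intro order_tendstoD) auto
  then obtain r0 where r0: "cdf M r0 < 1 - p"
    by (auto simp: eventually_at_bot_linorder)
  have "r0 < r" if "measure M {r..} \<le> p" for r
  proof (rule ccontr)
    assume "\<not> r0 < r"
    then have "measure M (space M - {..r0}) \<le> measure M {r..}"
      by (intro finite_measure_mono) auto
    then show False using that r0 prob_compl[of "{..r0}"] by (simp add: cdf_def)
  qed
  then show ?thesis by (auto simp: bdd_below_def intro: less_imp_le)
qed

lemma tail_quantile_less_imp_measure_atLeast_le:
  assumes "0 < p" "tail_quantile M p < s"
  shows "measure M {s..} \<le> p"
proof -
  obtain r where r: "measure M {r..} \<le> p" "r < s"
    using cInf_lessD[OF tail_quantile_set_nonempty[OF assms(1)]] assms(2)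
    by (auto simp: tail_quantile_def)
  have "measure M {s..} \<le> measure M {r..}" using r(2) by (intro finite_measure_mono) auto
  with r(1) show ?thesis by simp
qed

lemma less_tail_quantile_imp_measure_atLeast_gt:
  assumes "p < 1" "s < tail_quantile M p"
  shows "p < measure M {s..}"
proof (rule ccontr)
  assume "\<not> p < measure M {s..}"
  then have "tail_quantile M p \<le> s"
    unfolding tail_quantile_def by (intro cInf_lower bdd_below_tail_quantile_set assms) auto
  with assms(2) show False by simp
qed

lemma tail_quantile_antimono:
  assumes "0 < p" "p \<le> q" "q < 1"
  shows "tail_quantile M q \<le> tail_quantile M p"
  unfolding tail_quantile_def using assms
  by (intro cInf_superset_mono tail_quantile_set_nonempty bdd_below_tail_quantile_set) auto

lemma product_prob_space_iid: "product_prob_space (\<lambda>_::'i. M)"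
  by (rule product_prob_spaceI) (rule prob_space_axioms)

lemma prob_space_PiM_iid: "prob_space (PiM I (\<lambda>_. M))"
  by (rule prob_space_PiM) (rule prob_space_axioms)

lemma borel_measurable_PiM_component:
  "i \<in> I \<Longrightarrow> (\<lambda>x. x i) \<in> borel_measurable (PiM I (\<lambda>_. M))"
  using measurable_component_singleton[of i I "\<lambda>_. M"] by (simp cong: measurable_cong_sets)

lemma distr_PiM_iid_component: "i \<in> I \<Longrightarrow> distr (PiM I (\<lambda>_. M)) M (\<lambda>x. x i) = M"
  using distr_PiM_component[of I "\<lambda>_. M" i] prob_space_axioms by simp

lemma integrable_PiM_component:
  fixes h :: "real \<Rightarrow> real"
  assumes "i \<in> I" "integrable M h"
  shows "integrable (PiM I (\<lambda>_. M)) (\<lambda>x. h (x i))"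
  using assms integrable_distr_eq[OF measurable_component_singleton[OF assms(1), of "\<lambda>_. M"], of h]
  by (simp add: distr_PiM_iid_component)

lemma measure_PiM_all_less:
  assumes "finite I"
  shows "measure (PiM I (\<lambda>_. M)) (PiE I (\<lambda>_. {..<s})) = (1 - measure M {s..}) ^ card I"
proof -
  interpret iid: product_prob_space "\<lambda>_. M" by (rule product_prob_space_iid)
  interpret fin: finite_product_prob_space "\<lambda>_. M" I by standard fact
  show ?thesis
    using fin.prob_times[of "\<lambda>_. {..<s}"] prob_compl[of "{s..}"]
    by (simp add: Compl_eq_Diff_UNIV[symmetric] lessThan_def not_le)
qed

lemma integral_PiM_component:
  fixes h :: "real \<Rightarrow> real"
  assumes "i \<in> I" "h \<in> borel_measurable M"
  shows "integral\<^sup>L (PiM I (\<lambda>_. M)) (\<lambda>x. h (x i)) = expectation h"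
  using integral_distr[OF measurable_component_singleton[OF assms(1), of "\<lambda>_. M"] assms(2)]
  by (simp add: distr_PiM_iid_component assms(1))

end

section \<open>Expected maxima and assignment values\<close>

locale integrable_real_distribution = real_distribution +
  assumes integrable_id: "integrable M (\<lambda>x. x)"
begin

lemma integrable_abs_id: "integrable M abs"
  using integrable_abs[OF integrable_id] by simp

lemma integrable_PiM_if_abs_le_sum:
  fixes f :: "_ \<Rightarrow> real"
  assumes "finite I" "f \<in> borel_measurable (PiM I (\<lambda>_. M))"
    and "\<And>x. x \<in> space (PiM I (\<lambda>_. M)) \<Longrightarrow> \<bar>f x\<bar> \<le> c + (\<Sum>i\<in>I. \<bar>x i\<bar>)"
  shows "integrable (PiM I (\<lambda>_. M)) f"
proof (rule Bochner_Integration.integrable_bound[OF _ assms(2)])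
  interpret PiI: prob_space "PiM I (\<lambda>_. M)" by (rule prob_space_PiM_iid)
  show "integrable (PiM I (\<lambda>_. M)) (\<lambda>x. \<bar>c\<bar> + (\<Sum>i\<in>I. \<bar>x i\<bar>))"
    by (intro Bochner_Integration.integrable_add Bochner_Integration.integrable_sum
        PiI.integrable_const integrable_PiM_component integrable_abs_id)
  show "AE x in PiM I (\<lambda>_. M). norm (f x) \<le> norm (\<bar>c\<bar> + (\<Sum>i\<in>I. \<bar>x i\<bar>))"
    using assms(3) by (intro AE_I2) (force simp: sum_nonneg)
qed

lemma integrable_Max_PiM:
  assumes "finite I" "I \<noteq> {}"
  shows "integrable (PiM I (\<lambda>_. M)) (\<lambda>x. Max (x ` I))"
proof (rule integrable_PiM_if_abs_le_sum[where c = 0, OF assms(1)])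
  show "(\<lambda>x. Max (x ` I)) \<in> borel_measurable (PiM I (\<lambda>_. M))"
    using assms(1) by (intro borel_measurable_Max borel_measurable_PiM_component)
  fix x :: "_ \<Rightarrow> real"
  have "Max (x ` I) \<in> x ` I" using assms by (intro Max_in) auto
  then obtain j where "j \<in> I" "Max (x ` I) = x j" by auto
  then show "\<bar>Max (x ` I)\<bar> \<le> 0 + (\<Sum>i\<in>I. \<bar>x i\<bar>)"
    using member_le_sum[of j I "\<lambda>i. \<bar>x i\<bar>"] assms(1) by simp
qed

lemma integrable_assignment_max_on:
  assumes "finite R" "finite C" "card R \<le> card C" "finite J" "R \<times> C \<subseteq> J"
  shows "integrable (PiM J (\<lambda>_. M)) (assignment_max_on R C)"
proof (rule integrable_PiM_if_abs_le_sum[where c = 0, OF assms(4)])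
  have "(\<lambda>x. \<Sum>i\<in>R. x (i, \<pi> i)) \<in> borel_measurable (PiM J (\<lambda>_. M))" if "\<pi> \<in> injections R C" for \<pi>
    using that assms(5) by (intro borel_measurable_sum borel_measurable_PiM_component)
      (auto simp: injections_def)
  then show "assignment_max_on R C \<in> borel_measurable (PiM J (\<lambda>_. M))"
    unfolding assignment_max_on_def[abs_def]
    by (intro borel_measurable_Max finite_injections assms(1,2))
qed (use abs_assignment_max_on_le[OF assms] in simp)

definition stop_loss :: "real \<Rightarrow> real" where
  "stop_loss t = expectation (\<lambda>x. max (x - t) 0)"

lemma integrable_excess: "integrable M (\<lambda>x. max (x - t) 0)"
  by (intro integrable_max Bochner_Integration.integrable_diff integrable_id) auto

lemma expectation_le_add_card_stop_loss:
  fixes f :: "_ \<Rightarrow> real"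
  assumes "finite K" "K \<subseteq> J" "integrable (PiM J (\<lambda>_. M)) f"
    and "\<And>x. x \<in> space (PiM J (\<lambda>_. M)) \<Longrightarrow> f x \<le> c + (\<Sum>k\<in>K. max (x k - t) 0)"
  shows "integral\<^sup>L (PiM J (\<lambda>_. M)) f \<le> c + card K * stop_loss t"
proof -
  interpret PiJ: prob_space "PiM J (\<lambda>_. M)" by (rule prob_space_PiM_iid)
  have excess: "integrable (PiM J (\<lambda>_. M)) (\<lambda>x. max (x k - t) 0)" if "k \<in> K" for k
    using that assms(2) by (intro integrable_PiM_component integrable_excess) auto
  have "integral\<^sup>L (PiM J (\<lambda>_. M)) f \<le> (\<integral>x. c + (\<Sum>k\<in>K. max (x k - t) 0) \<partial>PiM J (\<lambda>_. M))"
    using assms(3,4) excess by (intro integral_mono) auto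
  also have "\<dots> = c + (\<Sum>k\<in>K. \<integral>x. max (x k - t) 0 \<partial>PiM J (\<lambda>_. M))"
    using excess
    by (simp add: Bochner_Integration.integral_add Bochner_Integration.integral_sum PiJ.prob_space)
  also have "\<dots> = c + (\<Sum>k\<in>K. stop_loss t)"
    using assms(2) unfolding stop_loss_def
    by (intro arg_cong2[where f = "(+)"] sum.cong refl integral_PiM_component
        borel_measurable_integrable[OF integrable_excess]) auto
  also have "\<dots> = c + card K * stop_loss t" by simp
  finally show ?thesis .
qed

lemma expectation_Max_le:
  assumes "finite I" "I \<noteq> {}"
  shows "integral\<^sup>L (PiM I (\<lambda>_. M)) (\<lambda>x. Max (x ` I)) \<le> t + card I * stop_loss t"
  using assms by (intro expectation_le_add_card_stop_loss integrable_Max_PiM Max_le_add_sum_excess) auto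

lemma expectation_Max_ge:
  assumes "finite I" "I \<noteq> {}" "0 \<le> s" "q \<le> measure M {s..}"
  shows "s * (1 - (1 - q) ^ card I) - expectation abs \<le> integral\<^sup>L (PiM I (\<lambda>_. M)) (\<lambda>x. Max (x ` I))"
proof -
  interpret PiI: prob_space "PiM I (\<lambda>_. M)" by (rule prob_space_PiM_iid)
  obtain i0 where i0: "i0 \<in> I" using assms(2) by auto
  define E where "E = PiE I (\<lambda>_. {..<s})"
  have E: "E \<in> sets (PiM I (\<lambda>_. M))" unfolding E_def using assms(1) by (intro sets_PiM_I_finite) auto
  have "measure (PiM I (\<lambda>_. M)) E = (1 - measure M {s..}) ^ card I"
    unfolding E_def by (rule measure_PiM_all_less[OF assms(1)])
  also have "\<dots> \<le> (1 - q) ^ card I" using assms(4) by (intro power_mono) auto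
  finally have PE: "measure (PiM I (\<lambda>_. M)) E \<le> (1 - q) ^ card I" .
  let ?A = "space (PiM I (\<lambda>_. M)) - E"
  have int_A: "integrable (PiM I (\<lambda>_. M)) (\<lambda>x. s * indicator ?A x)"
    using E by (intro integrable_mult_right integrable_real_indicator) (auto simp: less_top[symmetric])
  have int_abs: "integrable (PiM I (\<lambda>_. M)) (\<lambda>x. \<bar>x i0\<bar>)"
    using integrable_PiM_component[OF i0 integrable_abs_id] .
  have "s * (1 - (1 - q) ^ card I) - expectation abs \<le> s * measure (PiM I (\<lambda>_. M)) ?A - expectation abs"
    using PE assms(3) PiI.prob_compl[OF E] by (intro diff_right_mono mult_left_mono) auto
  also have "\<dots> = (\<integral>x. s * indicator ?A x - \<bar>x i0\<bar> \<partial>PiM I (\<lambda>_. M))"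
    using int_A int_abs integral_PiM_component[OF i0 borel_measurable_integrable[OF integrable_abs_id]]
    by (simp add: Bochner_Integration.integral_diff Int_absorb2)
  also have "\<dots> \<le> integral\<^sup>L (PiM I (\<lambda>_. M)) (\<lambda>x. Max (x ` I))"
  proof (rule integral_mono)
    show "integrable (PiM I (\<lambda>_. M)) (\<lambda>x. s * indicator ?A x - \<bar>x i0\<bar>)"
      using int_A int_abs by (rule Bochner_Integration.integrable_diff)
    show "integrable (PiM I (\<lambda>_. M)) (\<lambda>x. Max (x ` I))" by (rule integrable_Max_PiM[OF assms(1,2)])
    fix x assume x: "x \<in> space (PiM I (\<lambda>_. M))"
    show "s * indicator ?A x - \<bar>x i0\<bar> \<le> Max (x ` I)"
    proof (cases "x \<in> E")
      case True
      have "x i0 \<le> Max (x ` I)" using i0 assms(1) by (intro Max_ge) auto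
      with True show ?thesis by simp
    next
      case False
      then obtain i where "i \<in> I" "s \<le> x i" using x by (auto simp: E_def space_PiM PiE_iff not_less)
      moreover have "x i \<le> Max (x ` I)" using \<open>i \<in> I\<close> assms(1) by (intro Max_ge) auto
      ultimately show ?thesis using False x by simp
    qed
  qed
  finally show ?thesis .
qed

lemma expectation_Max_ge_tail_quantile:
  assumes "finite I" "I \<noteq> {}" "0 < q" "q < 1" "1 \<le> tail_quantile M q"
  shows "(tail_quantile M q - 1) * (1 - (1 - q) ^ card I) - expectation abs
    \<le> integral\<^sup>L (PiM I (\<lambda>_. M)) (\<lambda>x. Max (x ` I))"
  using assms less_tail_quantile_imp_measure_atLeast_gt[of q "tail_quantile M q - 1"]
  by (intro expectation_Max_ge) auto

text \<open>
  Greedy step: row \<open>r\<close> takes its largest entry \<open>j\<close> and the other rows are assigned optimally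
  to the columns except \<open>j\<close>. Integrating row \<open>r\<close> last (Fubini) turns this into a recursion
  in which each row contributes an expected maximum over the columns still free.
\<close>

lemma integral_assignment_max_on_merge_ge:
  assumes "finite R" "finite C" "r \<notin> R" "j \<in> C" "card R < card C"
    and "finite K" "({r} \<times> C) \<inter> K = {}" "R \<times> (C - {j}) \<subseteq> K"
    and slice: "integrable (PiM K (\<lambda>_. M))
      (\<lambda>z. assignment_max_on (insert r R) C (merge ({r} \<times> C) K (y, z)))"
  shows "y (r, j) + integral\<^sup>L (PiM K (\<lambda>_. M)) (assignment_max_on R (C - {j}))
    \<le> (\<integral>z. assignment_max_on (insert r R) C (merge ({r} \<times> C) K (y, z)) \<partial>PiM K (\<lambda>_. M))"
proof -
  interpret PiK: prob_space "PiM K (\<lambda>_. M)" by (rule prob_space_PiM_iid)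
  have int: "integrable (PiM K (\<lambda>_. M)) (assignment_max_on R (C - {j}))"
    using assms(1-6,8) by (intro integrable_assignment_max_on) (auto simp: card_Diff_singleton)
  have "y (r, j) + integral\<^sup>L (PiM K (\<lambda>_. M)) (assignment_max_on R (C - {j}))
      = (\<integral>z. y (r, j) + assignment_max_on R (C - {j}) z \<partial>PiM K (\<lambda>_. M))"
    using int by (simp add: Bochner_Integration.integral_add PiK.prob_space)
  also have "\<dots> \<le> (\<integral>z. assignment_max_on (insert r R) C (merge ({r} \<times> C) K (y, z)) \<partial>PiM K (\<lambda>_. M))"
  proof (rule integral_mono[OF _ slice])
    show "integrable (PiM K (\<lambda>_. M)) (\<lambda>z. y (r, j) + assignment_max_on R (C - {j}) z)"
      using int by simp
    fix z
    have "assignment_max_on R (C - {j}) z = assignment_max_on R (C - {j}) (merge ({r} \<times> C) K (y, z))"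
      using assms(3,8) by (intro assignment_max_on_cong) (auto simp: merge_def)
    moreover have "y (r, j) = merge ({r} \<times> C) K (y, z) (r, j)"
      using assms(4) by (simp add: merge_def)
    ultimately show "y (r, j) + assignment_max_on R (C - {j}) z
        \<le> assignment_max_on (insert r R) C (merge ({r} \<times> C) K (y, z))"
      using assms(1-5) by (simp add: assignment_max_on_insert_ge)
  qed
  finally show ?thesis .
qed

lemma expectation_assignment_max_on_ge:
  fixes L :: "nat \<Rightarrow> real" and R :: "'a set" and C :: "'b set" and J :: "('a \<times> 'b) set"
  assumes L: "\<And>I :: ('a \<times> 'b) set. finite I \<Longrightarrow> I \<noteq> {} \<Longrightarrow>
      L (card I) \<le> integral\<^sup>L (PiM I (\<lambda>_. M)) (\<lambda>x. Max (x ` I))"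
  shows "finite R \<Longrightarrow> finite C \<Longrightarrow> finite J \<Longrightarrow> R \<times> C \<subseteq> J \<Longrightarrow> card R \<le> card C \<Longrightarrow>
    (\<Sum>k<card R. L (card C - k)) \<le> integral\<^sup>L (PiM J (\<lambda>_. M)) (assignment_max_on R C)"
proof (induction R arbitrary: C J rule: finite_induct)
  case empty
  then show ?case by simp
next
  case (insert r R)
  define row where "row = {r} \<times> C"
  define rest where "rest = J - row"
  define S where "S = (\<Sum>k<card R. L (card C - Suc k))"
  interpret iid: product_prob_space "\<lambda>_::'a \<times> 'b. M" by (rule product_prob_space_iid)
  interpret row: prob_space "PiM row (\<lambda>_. M)" by (rule prob_space_PiM_iid)
  have C: "C \<noteq> {}" "card R < card C" using insert by auto
  have fin: "finite row" "finite rest" using insert by (auto simp: row_def rest_def)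
  have J: "row \<inter> rest = {}" "row \<union> rest = J" using insert.prems(3) by (auto simp: row_def rest_def)
  have row_ne: "row \<noteq> {}" using C by (simp add: row_def)
  have card_row: "card row = card C" by (simp add: row_def card_cartesian_product_singleton)
  have "(\<Sum>k<card (insert r R). L (card C - k)) = L (card C) + S"
    using insert.hyps by (simp add: S_def sum.lessThan_Suc_shift del: sum.lessThan_Suc)
  also have "\<dots> \<le> (\<integral>y. Max (y ` row) + S \<partial>PiM row (\<lambda>_. M))"
    using L[OF fin(1) row_ne] integrable_Max_PiM[OF fin(1) row_ne]
    by (simp add: row.prob_space card_row)
  also have "\<dots> \<le> integral\<^sup>L (PiM (row \<union> rest) (\<lambda>_. M)) (assignment_max_on (insert r R) C)"
  proof (rule iid.integral_PiM_union_ge[OF J(1) fin])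
    show "integrable (PiM (row \<union> rest) (\<lambda>_. M)) (assignment_max_on (insert r R) C)"
      unfolding J(2) using insert.hyps insert.prems by (intro integrable_assignment_max_on) auto
    show "integrable (PiM row (\<lambda>_. M)) (\<lambda>y. Max (y ` row) + S)"
      using integrable_Max_PiM[OF fin(1) row_ne] by simp
    fix y
    assume "y \<in> space (PiM row (\<lambda>_. M))"
      and slice: "integrable (PiM rest (\<lambda>_. M))
        (\<lambda>z. assignment_max_on (insert r R) C (merge row rest (y, z)))"
    have "Max (y ` row) \<in> y ` row" using fin(1) row_ne by (intro Max_in) auto
    then obtain j where j: "j \<in> C" "y (r, j) = Max (y ` row)" by (auto simp: row_def)
    have rest_j: "R \<times> (C - {j}) \<subseteq> rest" "card (C - {j}) = card C - 1"
      using insert.prems(1,3) insert.hyps(2) j(1) by (auto simp: rest_def row_def)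
    have "S \<le> integral\<^sup>L (PiM rest (\<lambda>_. M)) (assignment_max_on R (C - {j}))"
      using insert.IH[of "C - {j}" rest] insert.prems(1) fin(2) rest_j C(2) by (simp add: S_def)
    moreover have "y (r, j) + integral\<^sup>L (PiM rest (\<lambda>_. M)) (assignment_max_on R (C - {j}))
        \<le> (\<integral>z. assignment_max_on (insert r R) C (merge row rest (y, z)) \<partial>PiM rest (\<lambda>_. M))"
      unfolding row_def
      by (rule integral_assignment_max_on_merge_ge[OF insert.hyps(1) insert.prems(1) insert.hyps(2)
          j(1) C(2) fin(2) J(1)[unfolded row_def] rest_j(1) slice[unfolded row_def]])
    ultimately show "Max (y ` row) + S
        \<le> (\<integral>z. assignment_max_on (insert r R) C (merge row rest (y, z)) \<partial>PiM rest (\<lambda>_. M))"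
      using j(2) by linarith
  qed
  finally show ?case using J(2) by simp
qed

lemma expectation_sample_max_le:
  assumes "0 < n"
  shows "integral\<^sup>L (PiM {..<n} (\<lambda>_. M)) (sample_max n) \<le> t + n * stop_loss t"
  using expectation_Max_le[of "{..<n}" t] assms by (simp add: sample_max_def[abs_def] lessThan_empty_iff)

lemma expectation_sample_max_ge:
  assumes "0 < n" "0 < q" "q < 1" "1 \<le> tail_quantile M q"
  shows "(1 - 1 / (n * q)) * (tail_quantile M q - 1) - expectation abs
    \<le> integral\<^sup>L (PiM {..<n} (\<lambda>_. M)) (sample_max n)"
proof -
  have "(1 - q) ^ n \<le> 1 / (n * q)"
    using of_nat_mult_power_le_inverse[of q n] assms by (simp add: field_simps)
  then have "(1 - 1 / (n * q)) * (tail_quantile M q - 1) - expectation abs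
      \<le> (tail_quantile M q - 1) * (1 - (1 - q) ^ card {..<n}) - expectation abs"
    using assms(4) by (simp add: mult.commute mult_left_mono)
  also have "\<dots> \<le> integral\<^sup>L (PiM {..<n} (\<lambda>_. M)) (\<lambda>x. Max (x ` {..<n}))"
    using assms by (intro expectation_Max_ge_tail_quantile) (auto simp: lessThan_empty_iff)
  finally show ?thesis by (simp add: sample_max_def[abs_def])
qed

lemma expectation_assignment_max_le:
  assumes "0 < n"
  shows "integral\<^sup>L (PiM ({..<n} \<times> {..<n}) (\<lambda>_. M)) (assignment_max n) \<le> n * (t + n * stop_loss t)"
proof -
  have "assignment_max n x \<le> n * t + (\<Sum>k\<in>{..<n} \<times> {..<n}. max (x k - t) 0)" for x
  proof -
    have "assignment_max n x \<le> (\<Sum>i<n. Max ((\<lambda>j. x (i, j)) ` {..<n}))"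
      unfolding assignment_max_eq_assignment_max_on by (rule assignment_max_on_le_sum_Max) auto
    also have "\<dots> \<le> (\<Sum>i<n. t + (\<Sum>j<n. max (x (i, j) - t) 0))"
      using assms by (intro sum_mono Max_le_add_sum_excess) auto
    finally show ?thesis by (simp add: sum.distrib sum.cartesian_product)
  qed
  then have "integral\<^sup>L (PiM ({..<n} \<times> {..<n}) (\<lambda>_. M)) (assignment_max n) \<le> n * t + card ({..<n} \<times> {..<n}) * stop_loss t"
    unfolding assignment_max_eq_assignment_max_on[abs_def]
    by (intro expectation_le_add_card_stop_loss integrable_assignment_max_on) auto
  then show ?thesis by (simp add: algebra_simps)
qed

lemma expectation_assignment_max_ge:
  assumes "0 < q" "q < 1" "1 \<le> tail_quantile M q"
  shows "(n - 1 / q) * (tail_quantile M q - 1) - n * expectation abs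
    \<le> integral\<^sup>L (PiM ({..<n} \<times> {..<n}) (\<lambda>_. M)) (assignment_max n)"
proof -
  define L where "L c = (tail_quantile M q - 1) * (1 - (1 - q) ^ c) - expectation abs" for c
  have "(n - 1 / q) * (tail_quantile M q - 1) \<le> (n - (\<Sum>c<n. (1 - q) ^ Suc c)) * (tail_quantile M q - 1)"
    using sum_power_Suc_le_inverse[of q n] assms by (intro mult_right_mono) auto
  also have "\<dots> - n * expectation abs = (\<Sum>c<n. L (Suc c))"
    by (simp add: L_def sum_subtractf sum_distrib_left[symmetric] mult.commute del: power_Suc)
  also have "\<dots> = (\<Sum>k<n. L (n - k))"
    using sum.nat_diff_reindex[of "\<lambda>c. L (Suc c)" n] by (simp add: Suc_diff_Suc)
  also have "\<dots> \<le> integral\<^sup>L (PiM ({..<n} \<times> {..<n}) (\<lambda>_. M)) (assignment_max_on {..<n} {..<n})"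
  proof -
    have "L (card I) \<le> integral\<^sup>L (PiM I (\<lambda>_. M)) (\<lambda>x. Max (x ` I))"
      if "finite I" "I \<noteq> {}" for I :: "(nat \<times> nat) set"
      using expectation_Max_ge_tail_quantile[OF that assms] by (simp add: L_def)
    from expectation_assignment_max_on_ge[of L "{..<n}" "{..<n}" "{..<n} \<times> {..<n}", OF this]
    show ?thesis by simp
  qed
  finally show ?thesis by (simp add: assignment_max_eq_assignment_max_on[abs_def])
qed

lemma stop_loss_le_suminf:
  assumes t: "\<And>k. 0 \<le> t k" "filterlim t at_top sequentially"
    and le: "\<And>k. t (Suc k) * measure M {t k..} \<le> b k" and "summable b"
  shows "stop_loss (t 0) \<le> (\<Sum>k. b k)"
proof -
  have summable: "summable (\<lambda>k. t (Suc k) * measure M {t k..})"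
    using t(1) le by (intro summable_comparison_test'[OF \<open>summable b\<close>, of 0]) simp
  have "ennreal (stop_loss (t 0)) = (\<integral>\<^sup>+x. ennreal (max (x - t 0) 0) \<partial>M)"
    unfolding stop_loss_def by (rule nn_integral_eq_integral[symmetric]) (auto intro: integrable_excess)
  also have "\<dots> \<le> (\<integral>\<^sup>+x. (\<Sum>k. ennreal (t (Suc k)) * indicator {t k..} x) \<partial>M)"
    by (intro nn_integral_mono excess_le_suminf_indicator t)
  also have "\<dots> = (\<Sum>k. ennreal (t (Suc k)) * emeasure M {t k..})"
    by (subst nn_integral_suminf) (auto simp: nn_integral_cmult_indicator)
  also have "\<dots> = (\<Sum>k. ennreal (t (Suc k) * measure M {t k..}))"
    using t(1) by (simp add: emeasure_eq_measure ennreal_mult)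
  also have "\<dots> = ennreal (\<Sum>k. t (Suc k) * measure M {t k..})"
    using t(1) summable by (intro suminf_ennreal2) auto
  finally have "stop_loss (t 0) \<le> (\<Sum>k. t (Suc k) * measure M {t k..})"
    using t(1) summable by (simp add: suminf_nonneg)
  also have "\<dots> \<le> (\<Sum>k. b k)"
    using le summable \<open>summable b\<close> by (intro suminf_le)
  finally show ?thesis .
qed

end

section \<open>Slowly varying tail quantile\<close>

locale slowly_varying_tail_distribution = integrable_real_distribution +
  assumes tail_quantile_tendsto_at_top: "filterlim (tail_quantile M) at_top (at_right 0)"
    and tail_quantile_slowly_varying:
      "\<And>c. 0 < c \<Longrightarrow> ((\<lambda>p. tail_quantile M (c * p) / tail_quantile M p) \<longlongrightarrow> 1) (at_right 0)"
begin

lemma eventually_tail_quantile_doubling: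
  "eventually (\<lambda>p. 0 < tail_quantile M p \<and> (\<forall>k. tail_quantile M (p / 4 ^ k) \<le> 2 ^ k * tail_quantile M p))
    (at_right 0)"
proof -
  have "eventually (\<lambda>p. 0 < tail_quantile M p) (at_right 0)"
    using tail_quantile_tendsto_at_top by (simp add: filterlim_at_top_dense)
  moreover have "eventually (\<lambda>p. tail_quantile M ((1 / 4) * p) / tail_quantile M p < 2) (at_right 0)"
    using tail_quantile_slowly_varying[of "1 / 4"] by (rule order_tendstoD) simp_all
  ultimately have "eventually (\<lambda>p. 0 < tail_quantile M p \<and> tail_quantile M (p / 4) \<le> 2 * tail_quantile M p)
      (at_right 0)"
    by eventually_elim (simp add: field_simps)
  then obtain q0 where q0: "0 < q0"
    "\<And>p. 0 < p \<Longrightarrow> p < q0 \<Longrightarrow> 0 < tail_quantile M p \<and> tail_quantile M (p / 4) \<le> 2 * tail_quantile M p"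
    unfolding eventually_at_right_field by auto
  have "tail_quantile M (p / 4 ^ k) \<le> 2 ^ k * tail_quantile M p" if "0 < p" "p < q0" for p k
  proof (induction k)
    case (Suc k)
    have "p / 4 ^ k \<le> p" using that(1) by (simp add: divide_le_eq)
    then have "tail_quantile M (p / 4 ^ k / 4) \<le> 2 * tail_quantile M (p / 4 ^ k)"
      using that q0(2)[of "p / 4 ^ k"] by simp
    with Suc show ?case by (simp add: field_simps)
  qed simp
  then show ?thesis
    unfolding eventually_at_right_field using q0 by (intro exI[of _ q0]) auto
qed

text \<open>
  On the levels \<open>t\<^sub>k = g(p/4\<^sup>k) + 1\<close> we have \<open>P(X \<ge> t\<^sub>k) \<le> p/4\<^sup>k\<close>, while the doubling bound keeps
  \<open>t\<^sub>k\<^sub>+\<^sub>1 \<le> 2\<^sup>k\<^sup>+\<^sup>1 g(p) + 1\<close>; so the series of \<open>stop_loss_le_suminf\<close> is geometric.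
\<close>

lemma stop_loss_tail_quantile_le:
  assumes p: "0 < p" "p < 1" "0 < tail_quantile M p"
    and doubling: "\<And>k. tail_quantile M (p / 4 ^ k) \<le> 2 ^ k * tail_quantile M p"
  shows "stop_loss (tail_quantile M p + 1) \<le> p * (4 * tail_quantile M p + 2)"
proof -
  let ?g = "tail_quantile M p"
  define t where "t k = tail_quantile M (p / 4 ^ k) + 1" for k
  define b where "b k = p * (2 * ?g * (1 / 2) ^ k + (1 / 4) ^ k)" for k
  have p_k: "0 < p / 4 ^ k" "p / 4 ^ k \<le> p" for k :: nat using p(1) by (auto simp: divide_le_eq)
  have t_nonneg: "0 \<le> t k" for k
    using tail_quantile_antimono[OF p_k(1)[of k] p_k(2)[of k] p(2)] p(3) by (simp add: t_def)
  have "filterlim (\<lambda>k. p / 4 ^ k) (at_right 0) sequentially"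
    using p(1) by (intro tendsto_imp_filterlim_at_right LIMSEQ_divide_realpow_zero) auto
  then have "filterlim (\<lambda>k. tail_quantile M (p / 4 ^ k)) at_top sequentially"
    by (rule filterlim_compose[OF tail_quantile_tendsto_at_top])
  then have "filterlim t at_top sequentially"
    by (rule filterlim_at_top_mono) (simp add: t_def)
  have term_le: "t (Suc k) * measure M {t k..} \<le> b k" for k
  proof -
    have "measure M {t k..} \<le> p / 4 ^ k"
      using p_k(1) by (intro tail_quantile_less_imp_measure_atLeast_le) (simp_all add: t_def)
    then have "t (Suc k) * measure M {t k..} \<le> (2 ^ Suc k * ?g + 1) * (p / 4 ^ k)"
      using doubling[of "Suc k"] t_nonneg[of "Suc k"]
      by (intro mult_mono) (simp_all add: t_def)
    also have "\<dots> = b k"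
    proof -
      have "(2::real) ^ k * 2 ^ k = 4 ^ k" by (simp flip: power_mult_distrib)
      then show ?thesis by (simp add: b_def field_simps power_divide)
    qed
    finally show ?thesis .
  qed
  have "(\<lambda>k. (1 / 2 :: real) ^ k) sums 2" "(\<lambda>k. (1 / 4 :: real) ^ k) sums (4 / 3)"
    using geometric_sums[of "1 / 2 :: real"] geometric_sums[of "1 / 4 :: real"] by simp_all
  then have "(\<lambda>k. 2 * ?g * (1 / 2) ^ k + (1 / 4) ^ k) sums (2 * ?g * 2 + 4 / 3)"
    by (rule sums_add[OF sums_mult])
  then have b_sums: "b sums (p * (2 * ?g * 2 + 4 / 3))"
    unfolding b_def by (rule sums_mult)
  have "stop_loss (t 0) \<le> (\<Sum>k. b k)"
    using b_sums by (intro stop_loss_le_suminf t_nonneg term_le \<open>filterlim t at_top sequentially\<close>)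
      (simp add: sums_iff)
  also have "\<dots> \<le> p * (4 * ?g + 2)"
    using b_sums p(1) by (simp add: sums_iff)
  finally show ?thesis by (simp add: t_def)
qed

lemma eventually_stop_loss_tail_quantile_le:
  "eventually (\<lambda>p. stop_loss (tail_quantile M p + 1) \<le> p * (4 * tail_quantile M p + 2)) (at_right 0)"
proof -
  have "eventually (\<lambda>p. 0 < p \<and> p < 1) (at_right (0::real))"
    unfolding eventually_at_right_field by (intro exI[of _ 1]) auto
  with eventually_tail_quantile_doubling show ?thesis
    by eventually_elim (rule stop_loss_tail_quantile_le; simp)
qed

lemma filterlim_tail_quantile_inverse_nat: "filterlim (\<lambda>n. tail_quantile M (1 / real n)) at_top sequentially"
  by (rule filterlim_compose[OF tail_quantile_tendsto_at_top filterlim_const_over_nat_at_right_0]) simp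

lemma tail_quantile_affine_ratio_tendsto:
  assumes "0 < c"
  shows "((\<lambda>n. (a * tail_quantile M (c / n) + C) / tail_quantile M (1 / n)) \<longlongrightarrow> a) sequentially"
proof -
  have "((\<lambda>n. tail_quantile M (c / n) / tail_quantile M (1 / n)) \<longlongrightarrow> 1) sequentially"
    using filterlim_compose[OF tail_quantile_slowly_varying[OF assms]
        filterlim_const_over_nat_at_right_0[of 1]] by simp
  then have "((\<lambda>n. a * (tail_quantile M (c / n) / tail_quantile M (1 / n)) + C / tail_quantile M (1 / n))
      \<longlongrightarrow> a * 1 + 0) sequentially"
    by (intro tendsto_intros tendsto_divide_0[OF tendsto_const]
        filterlim_at_top_imp_at_infinity[OF filterlim_tail_quantile_inverse_nat])
  then show ?thesis by (simp add: add_divide_distrib)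
qed

lemma asymp_equiv_scaled_tail_quantileI:
  fixes f w :: "nat \<Rightarrow> real"
  assumes w: "eventually (\<lambda>n. 0 < w n) sequentially"
    and upper: "\<And>e. 0 < e \<Longrightarrow> \<exists>c>0. \<exists>C.
      eventually (\<lambda>n. f n \<le> w n * ((1 + e) * tail_quantile M (c / n) + C)) sequentially"
    and lower: "\<And>e. 0 < e \<Longrightarrow> \<exists>c>0. \<exists>C.
      eventually (\<lambda>n. w n * ((1 - e) * tail_quantile M (c / n) - C) \<le> f n) sequentially"
  shows "f \<sim>[sequentially] (\<lambda>n. w n * tail_quantile M (1 / n))"
proof (rule asymp_equivI_eventually_ratio_bounds)
  let ?G = "\<lambda>n. tail_quantile M (1 / real n)"
  have G_pos: "eventually (\<lambda>n. 0 < ?G n) sequentially"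
    using filterlim_tail_quantile_inverse_nat by (simp add: filterlim_at_top_dense)
  with w show "eventually (\<lambda>n. 0 < w n * ?G n) sequentially"
    by eventually_elim simp
  fix e :: real
  assume "0 < e"
  obtain c C where "0 < c"
    and f_le: "eventually (\<lambda>n. f n \<le> w n * ((1 + e / 2) * tail_quantile M (c / n) + C)) sequentially"
    using upper[of "e / 2"] \<open>0 < e\<close> by auto
  have "eventually (\<lambda>n. ((1 + e / 2) * tail_quantile M (c / n) + C) / ?G n < 1 + e) sequentially"
    using tail_quantile_affine_ratio_tendsto[OF \<open>0 < c\<close>]
    by (rule order_tendstoD(2)) (use \<open>0 < e\<close> in simp)
  with w G_pos f_le show "eventually (\<lambda>n. f n \<le> (1 + e) * (w n * ?G n)) sequentially"
  proof eventually_elim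
    case (elim n)
    then have "w n * ((1 + e / 2) * tail_quantile M (c / n) + C) \<le> w n * ((1 + e) * ?G n)"
      by (intro mult_left_mono) (simp_all add: pos_divide_less_eq)
    with elim(3) show ?case by (simp add: algebra_simps)
  qed
  obtain c' C' where "0 < c'"
    and f_ge: "eventually (\<lambda>n. w n * ((1 - e / 2) * tail_quantile M (c' / n) - C') \<le> f n) sequentially"
    using lower[of "e / 2"] \<open>0 < e\<close> by auto
  have "eventually (\<lambda>n. 1 - e < ((1 - e / 2) * tail_quantile M (c' / n) + - C') / ?G n) sequentially"
    using tail_quantile_affine_ratio_tendsto[OF \<open>0 < c'\<close>]
    by (rule order_tendstoD(1)) (use \<open>0 < e\<close> in simp)
  with w G_pos f_ge show "eventually (\<lambda>n. (1 - e) * (w n * ?G n) \<le> f n) sequentially"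
  proof eventually_elim
    case (elim n)
    then have "w n * ((1 - e) * ?G n) \<le> w n * ((1 - e / 2) * tail_quantile M (c' / n) - C')"
      by (intro mult_left_mono) (simp_all add: pos_less_divide_eq)
    with elim(3) show ?case by (simp add: algebra_simps)
  qed
qed

lemma eventually_stop_loss_tail_quantile_sequentially:
  assumes "0 < a"
  shows "eventually (\<lambda>n. 0 < n \<and> tail_quantile M (a / n) + 1 + n * stop_loss (tail_quantile M (a / n) + 1)
    \<le> (1 + 4 * a) * tail_quantile M (a / n) + (1 + 2 * a)) sequentially"
  using eventually_compose_filterlim[OF eventually_stop_loss_tail_quantile_le
      filterlim_const_over_nat_at_right_0[OF assms]] eventually_gt_at_top[of 0]
proof eventually_elim
  case (elim n)
  then have "n * stop_loss (tail_quantile M (a / n) + 1) \<le> n * (a / n * (4 * tail_quantile M (a / n) + 2))"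
    by (intro mult_left_mono) auto
  with elim(2) show ?case by (simp add: algebra_simps)
qed

lemma eventually_tail_quantile_ge_one:
  assumes "0 < b"
  shows "eventually (\<lambda>n. 0 < n \<and> b / n < 1 \<and> 1 \<le> tail_quantile M (b / n)) sequentially"
proof -
  have "eventually (\<lambda>p. p < 1) (at_right (0::real))"
    unfolding eventually_at_right_field by (intro exI[of _ 1]) auto
  moreover have "eventually (\<lambda>p. 1 \<le> tail_quantile M p) (at_right 0)"
    using tail_quantile_tendsto_at_top by (simp add: filterlim_at_top)
  ultimately have "eventually (\<lambda>p. p < 1 \<and> 1 \<le> tail_quantile M p) (at_right 0)"
    by eventually_elim simp
  from eventually_compose_filterlim[OF this filterlim_const_over_nat_at_right_0[OF assms]]
  show ?thesis using eventually_gt_at_top[of 0] by eventually_elim simp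
qed

lemma eventually_expectation_sample_max_le:
  assumes "0 < a"
  shows "eventually (\<lambda>n. integral\<^sup>L (PiM {..<n} (\<lambda>_. M)) (sample_max n)
    \<le> (1 + 4 * a) * tail_quantile M (a / n) + (1 + 2 * a)) sequentially"
  using eventually_stop_loss_tail_quantile_sequentially[OF assms]
proof eventually_elim
  case (elim n)
  with expectation_sample_max_le[of n "tail_quantile M (a / n) + 1"] show ?case by linarith
qed

lemma eventually_expectation_assignment_max_le:
  assumes "0 < a"
  shows "eventually (\<lambda>n. integral\<^sup>L (PiM ({..<n} \<times> {..<n}) (\<lambda>_. M)) (assignment_max n)
    \<le> n * ((1 + 4 * a) * tail_quantile M (a / n) + (1 + 2 * a))) sequentially"
  using eventually_stop_loss_tail_quantile_sequentially[OF assms]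
proof eventually_elim
  case (elim n)
  let ?t = "tail_quantile M (a / n) + 1"
  have "integral\<^sup>L (PiM ({..<n} \<times> {..<n}) (\<lambda>_. M)) (assignment_max n) \<le> n * (?t + n * stop_loss ?t)"
    using elim by (intro expectation_assignment_max_le) simp
  also have "\<dots> \<le> n * ((1 + 4 * a) * tail_quantile M (a / n) + (1 + 2 * a))"
    using elim by (intro mult_left_mono) simp_all
  finally show ?case .
qed

lemma eventually_expectation_sample_max_ge:
  assumes "0 < b"
  shows "eventually (\<lambda>n. (1 - 1 / b) * tail_quantile M (b / n) - (1 - 1 / b + expectation abs)
    \<le> integral\<^sup>L (PiM {..<n} (\<lambda>_. M)) (sample_max n)) sequentially"
  using eventually_tail_quantile_ge_one[OF assms]
proof eventually_elim
  case (elim n)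
  with assms have "(1 - 1 / (n * (b / n))) * (tail_quantile M (b / n) - 1) - expectation abs
      \<le> integral\<^sup>L (PiM {..<n} (\<lambda>_. M)) (sample_max n)"
    by (intro expectation_sample_max_ge) auto
  with elim show ?case by (simp add: algebra_simps)
qed

lemma eventually_expectation_assignment_max_ge:
  assumes "0 < b"
  shows "eventually (\<lambda>n. n * ((1 - 1 / b) * tail_quantile M (b / n) - (1 - 1 / b + expectation abs))
    \<le> integral\<^sup>L (PiM ({..<n} \<times> {..<n}) (\<lambda>_. M)) (assignment_max n)) sequentially"
  using eventually_tail_quantile_ge_one[OF assms]
proof eventually_elim
  case (elim n)
  with assms have "(n - 1 / (b / n)) * (tail_quantile M (b / n) - 1) - n * expectation abs
      \<le> integral\<^sup>L (PiM ({..<n} \<times> {..<n}) (\<lambda>_. M)) (assignment_max n)"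
    by (intro expectation_assignment_max_ge) auto
  with elim show ?case by (simp add: algebra_simps)
qed

lemma expectation_sample_max_asymp_equiv:
  "(\<lambda>n. integral\<^sup>L (PiM {..<n} (\<lambda>_. M)) (sample_max n)) \<sim>[sequentially] (\<lambda>n. tail_quantile M (1 / n))"
proof -
  have "(\<lambda>n. integral\<^sup>L (PiM {..<n} (\<lambda>_. M)) (sample_max n)) \<sim>[sequentially] (\<lambda>n. 1 * tail_quantile M (1 / n))"
  proof (rule asymp_equiv_scaled_tail_quantileI)
    fix e :: real
    assume "0 < e"
    then have "0 < e / 4" "0 < 1 / e" by simp_all
    show "\<exists>c>0. \<exists>C. eventually (\<lambda>n. integral\<^sup>L (PiM {..<n} (\<lambda>_. M)) (sample_max n)
        \<le> 1 * ((1 + e) * tail_quantile M (c / n) + C)) sequentially"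
    proof (intro exI conjI)
      show "eventually (\<lambda>n. integral\<^sup>L (PiM {..<n} (\<lambda>_. M)) (sample_max n)
          \<le> 1 * ((1 + e) * tail_quantile M (e / 4 / n) + (1 + e / 2))) sequentially"
        using eventually_expectation_sample_max_le[OF \<open>0 < e / 4\<close>] by simp
    qed fact
    show "\<exists>c>0. \<exists>C. eventually (\<lambda>n. 1 * ((1 - e) * tail_quantile M (c / n) - C)
        \<le> integral\<^sup>L (PiM {..<n} (\<lambda>_. M)) (sample_max n)) sequentially"
    proof (intro exI conjI)
      show "eventually (\<lambda>n. 1 * ((1 - e) * tail_quantile M (1 / e / n) - (1 - e + expectation abs))
          \<le> integral\<^sup>L (PiM {..<n} (\<lambda>_. M)) (sample_max n)) sequentially"
        using eventually_expectation_sample_max_ge[OF \<open>0 < 1 / e\<close>] by simp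
    qed fact
  qed simp
  then show ?thesis by simp
qed

lemma expectation_assignment_max_asymp_equiv:
  "(\<lambda>n. integral\<^sup>L (PiM ({..<n} \<times> {..<n}) (\<lambda>_. M)) (assignment_max n))
    \<sim>[sequentially] (\<lambda>n. n * tail_quantile M (1 / n))"
proof (rule asymp_equiv_scaled_tail_quantileI)
  show "eventually (\<lambda>n. 0 < real n) sequentially"
    using eventually_gt_at_top[of 0] by eventually_elim simp
  fix e :: real
  assume "0 < e"
  then have "0 < e / 4" "0 < 1 / e" by simp_all
  show "\<exists>c>0. \<exists>C. eventually (\<lambda>n. integral\<^sup>L (PiM ({..<n} \<times> {..<n}) (\<lambda>_. M)) (assignment_max n)
      \<le> n * ((1 + e) * tail_quantile M (c / n) + C)) sequentially"
  proof (intro exI conjI)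
    show "eventually (\<lambda>n. integral\<^sup>L (PiM ({..<n} \<times> {..<n}) (\<lambda>_. M)) (assignment_max n)
        \<le> n * ((1 + e) * tail_quantile M (e / 4 / n) + (1 + e / 2))) sequentially"
      using eventually_expectation_assignment_max_le[OF \<open>0 < e / 4\<close>] by simp
  qed fact
  show "\<exists>c>0. \<exists>C. eventually (\<lambda>n. n * ((1 - e) * tail_quantile M (c / n) - C)
      \<le> integral\<^sup>L (PiM ({..<n} \<times> {..<n}) (\<lambda>_. M)) (assignment_max n)) sequentially"
  proof (intro exI conjI)
    show "eventually (\<lambda>n. n * ((1 - e) * tail_quantile M (1 / e / n) - (1 - e + expectation abs))
        \<le> integral\<^sup>L (PiM ({..<n} \<times> {..<n}) (\<lambda>_. M)) (assignment_max n)) sequentially"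
      using eventually_expectation_assignment_max_ge[OF \<open>0 < 1 / e\<close>] by simp
  qed fact
qed

end

theorem theorem1:
  fixes P :: "real measure"
  assumes "prob_space P"
    and "sets P = sets borel"
    and "integrable P (\<lambda>x. x)"
    and "filterlim (tail_quantile P) at_top (at_right 0)"
    and "\<And>c. c > 0 \<Longrightarrow>
           ((\<lambda>p. tail_quantile P (c * p) / tail_quantile P p) \<longlongrightarrow> 1) (at_right 0)"
  shows "(\<lambda>n. integral\<^sup>L (PiM {..<n} (\<lambda>_. P)) (sample_max n))
           \<sim>[sequentially] (\<lambda>n. tail_quantile P (1 / real n))
       \<and> (\<lambda>n. integral\<^sup>L (PiM ({..<n} \<times> {..<n}) (\<lambda>_. P)) (assignment_max n))
           \<sim>[sequentially] (\<lambda>n. real n * tail_quantile P (1 / real n))"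
proof -
  interpret slowly_varying_tail_distribution P
    using assms
    by (intro slowly_varying_tail_distribution.intro integrable_real_distribution.intro
        real_distribution.intro)
      (simp_all add: real_distribution_axioms_def integrable_real_distribution_axioms_def
        slowly_varying_tail_distribution_axioms_def)
  show ?thesis
    using expectation_sample_max_asymp_equiv expectation_assignment_max_asymp_equiv by simp
qed

end
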